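(* Let $n\ge 2$ and $M=S+L\in M(n,\mathbb R)$ with $S\in\mathcal S_{\neq}$ and $L\in so(n)$, and suppose that $S$ and $L$ do not share any $k$-dimensional real invariant subspace, for every $k=1,\dots,n-1$. For $x>0$ let $\Pi_x=x^{-M}x^{-M^*}$. Then $$\bigcap_{x>0}G(\Pi_x)=\{I,-I\}.$$
   Context: $\mathcal S(n,\mathbb R)$ denotes the real symmetric $n\times n$ matrices, and $\mathcal S_{\neq}\subseteq\mathcal S(n,\mathbb R)$ the symmetric matrices whose $n$ eigenvalues are pairwise distinct. $so(n)$ denotes the real skew-symmetric $n\times n$ matrices. For $x>0$, $x^{-M}=\exp(-M\log x)$. A real invariant subspace of a matrix $T\in M(n,\mathbb R)$ is a linear subspace $V\subseteq\mathbb R^n$ with $TV\subseteq V$. For a matrix $\Pi\in M(n,\mathbb R)$, $G(\Pi)=\{O\in O(n):O\Pi=\Pi O\}$, where $O(n)$ is the orthogonal group. No restriction on the eigenvalues of $M$ is imposed. *)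

theory Defs
  imports "HOL-Analysis.Analysis"
begin

fun mat_pow :: "real^'n^'n \<Rightarrow> nat \<Rightarrow> real^'n^'n" where
  "mat_pow A 0 = mat 1"
| "mat_pow A (Suc k) = A ** mat_pow A k"

definition mat_exp :: "real^'n^'n \<Rightarrow> real^'n^'n" where
  "mat_exp A = (\<Sum>k. (1 / fact k) *\<^sub>R mat_pow A k)"

definition mat_neg_powr :: "real \<Rightarrow> real^'n^'n \<Rightarrow> real^'n^'n" where
  "mat_neg_powr x M = mat_exp (- (ln x *\<^sub>R M))"

definition symmetric_matrix :: "real^'n^'n \<Rightarrow> bool" where
  "symmetric_matrix S \<longleftrightarrow> transpose S = S"

definition skew_symmetric_matrix :: "real^'n^'n \<Rightarrow> bool" where
  "skew_symmetric_matrix L \<longleftrightarrow> transpose L = - L"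

definition real_eigenvalues :: "real^'n^'n \<Rightarrow> real set" where
  "real_eigenvalues A = {c. \<exists>v. v \<noteq> 0 \<and> A *v v = c *\<^sub>R v}"

definition sym_distinct_eig :: "real^'n^'n \<Rightarrow> bool" where
  "sym_distinct_eig S \<longleftrightarrow> symmetric_matrix S \<and> card (real_eigenvalues S) = CARD('n)"

definition real_invariant_subspace :: "real^'n^'n \<Rightarrow> (real^'n) set \<Rightarrow> bool" where
  "real_invariant_subspace T V \<longleftrightarrow> subspace V \<and> (\<forall>v\<in>V. T *v v \<in> V)"

definition orth_commutant :: "real^'n^'n \<Rightarrow> (real^'n^'n) set" where
  "orth_commutant P = {Q. orthogonal_matrix Q \<and> Q ** P = P ** Q}"

end

theory Submission
  imports Defs
begin

(*
  Write x = e^t, A = -M = -(S + L) and B = -M^T = L - S, so that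
  Pi_x = exp(tA) exp(tB).  If an orthogonal Q commutes with Pi_x for every x > 0,
  comparing the Taylor expansion
     exp(tA) exp(tB) = I + t (A + B) + t^2 ((A^2 + B^2)/2 + AB) + o(t^2)
  order by order shows that Q commutes with A + B = -2S and with
  (A^2 + B^2)/2 + AB = 2S^2 + [L, S], hence with S and with [L, S].
  Since S has n distinct eigenvalues, Q is diagonal with entries +1/-1 in an
  orthogonal eigenbasis of S; evaluating [Q, [L, S]] = 0 in that basis gives
  [Q, L] = 0.  Every eigenspace of Q is then invariant under S and L, so by the
  irreducibility hypothesis it is all of R^n, i.e. Q = I or Q = -I.
*)

lemma bounded_bilinear_matrix_mult:
  "bounded_bilinear ((**) :: real^'n^'m \<Rightarrow> real^'p^'n \<Rightarrow> real^'p^'m)"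
  unfolding bilinear_conv_bounded_bilinear[symmetric] bilinear_def linear_iff
  by (auto simp: matrix_matrix_mult_def vec_eq_iff sum.distrib algebra_simps sum_distrib_left)

lemmas matrix_mult_algebra =
  bounded_bilinear.add_left[OF bounded_bilinear_matrix_mult]
  bounded_bilinear.add_right[OF bounded_bilinear_matrix_mult]
  bounded_bilinear.diff_left[OF bounded_bilinear_matrix_mult]
  bounded_bilinear.diff_right[OF bounded_bilinear_matrix_mult]
  bounded_bilinear.minus_left[OF bounded_bilinear_matrix_mult]
  bounded_bilinear.minus_right[OF bounded_bilinear_matrix_mult]
  bounded_bilinear.scaleR_left[OF bounded_bilinear_matrix_mult]
  bounded_bilinear.scaleR_right[OF bounded_bilinear_matrix_mult]

lemma mat_pow_scaleR: "mat_pow (t *\<^sub>R A) k = t ^ k *\<^sub>R mat_pow (A::real^'n^'n) k"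
  by (induction k) (simp_all add: matrix_mult_algebra)

lemma norm_mat_pow_le:
  fixes A :: "real^'n^'n"
  obtains c where "c \<ge> 0" "\<And>k. norm (mat_pow A k) \<le> norm (mat 1 :: real^'n^'n) * c ^ k"
proof -
  obtain K where K: "K > 0" "\<And>(X::real^'n^'n) (Y::real^'n^'n). norm (X ** Y) \<le> norm X * norm Y * K"
    using bounded_bilinear.pos_bounded[OF bounded_bilinear_matrix_mult] by blast
  have "norm (mat_pow A k) \<le> norm (mat 1 :: real^'n^'n) * (K * norm A) ^ k" for k
  proof (induction k)
    case (Suc k)
    have "norm (mat_pow A (Suc k)) \<le> norm A * norm (mat_pow A k) * K"
      using K(2)[of A "mat_pow A k"] by (simp add: mult_ac)
    also have "\<dots> \<le> norm A * (norm (mat 1 :: real^'n^'n) * (K * norm A) ^ k) * K"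
      using Suc K(1) by (intro mult_right_mono mult_left_mono) auto
    finally show ?case by (simp add: algebra_simps)
  qed simp
  with K(1) show ?thesis by (intro that[of "K * norm A"]) auto
qed

lemma summable_norm_exp_series:
  fixes A :: "real^'n^'n"
  shows "summable (\<lambda>k. norm ((1 / fact k) *\<^sub>R mat_pow A k))"
proof -
  obtain c where c: "c \<ge> 0" "\<And>k. norm (mat_pow A k) \<le> norm (mat 1 :: real^'n^'n) * c ^ k"
    using norm_mat_pow_le[of A] by blast
  have "summable (\<lambda>k. norm (mat 1 :: real^'n^'n) * (c ^ k / fact k))"
    using summable_exp_generic[of c] by (intro summable_mult) (simp add: divide_inverse mult.commute)
  then show ?thesis
    by (rule summable_comparison_test[rotated])
       (auto intro!: exI[of _ 0] simp: c(2) divide_right_mono)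
qed

(* A power series in a real variable with absolutely summable coefficients in a
   Banach space is continuous at 0: by the Weierstrass M-test it is a uniform
   limit of polynomials on [-1, 1]. *)
lemma powser_tendsto_at_0:
  fixes C :: "nat \<Rightarrow> 'a::banach"
  assumes summable: "summable (\<lambda>k. norm (C k))"
  shows "((\<lambda>t::real. \<Sum>k. t ^ k *\<^sub>R C k) \<longlongrightarrow> C 0) (at 0)"
proof -
  let ?f = "\<lambda>t::real. \<Sum>k. t ^ k *\<^sub>R C k"
  have "norm (t ^ k *\<^sub>R C k) \<le> norm (C k)" if "t \<in> cball 0 1" for t k
    using that by (auto simp: power_abs intro!: mult_left_le_one_le power_le_one)
  then have "uniform_limit (cball 0 1) (\<lambda>n t. \<Sum>k<n. t ^ k *\<^sub>R C k) ?f sequentially"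
    by (rule Weierstrass_m_test[OF _ summable])
  then have "continuous_on (cball 0 1) ?f"
    by (rule uniform_limit_theorem[rotated]) (auto intro!: always_eventually continuous_intros)
  then have "isCont ?f 0"
    by (rule continuous_on_interior) simp
  moreover have "?f 0 = C 0"
  proof -
    have "(\<lambda>k. 0 ^ k *\<^sub>R C k) = (\<lambda>k. if k = 0 then C k else 0)"
      by (simp add: fun_eq_iff)
    then show ?thesis using sums_single[of 0 C] by (simp add: sums_iff)
  qed
  ultimately show ?thesis
    by (simp add: isCont_def)
qed

definition exp_remainder :: "real^'n^'n \<Rightarrow> real \<Rightarrow> real^'n^'n" where
  "exp_remainder A t = (\<Sum>k. t ^ k *\<^sub>R ((1 / fact (k + 2)) *\<^sub>R mat_pow A (k + 2)))"

lemma mat_exp_second_order: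
  fixes A :: "real^'n^'n"
  shows "mat_exp (t *\<^sub>R A) = mat 1 + t *\<^sub>R A + t\<^sup>2 *\<^sub>R exp_remainder A t"
proof -
  define C where "C k = (1 / fact k) *\<^sub>R mat_pow A k" for k
  have series: "(\<lambda>k. (1 / fact k) *\<^sub>R mat_pow (t *\<^sub>R A) k) = (\<lambda>k. t ^ k *\<^sub>R C k)"
    by (simp add: C_def mat_pow_scaleR mult.commute)
  have summable: "summable (\<lambda>k. t ^ k *\<^sub>R C k)"
    using summable_norm_cancel[OF summable_norm_exp_series[of "t *\<^sub>R A"]] by (simp only: series)
  have "mat_exp (t *\<^sub>R A) = (\<Sum>k. t ^ (k + 2) *\<^sub>R C (k + 2)) + (\<Sum>k<2. t ^ k *\<^sub>R C k)"
    unfolding mat_exp_def series by (rule suminf_split_initial_segment[OF summable])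
  also have "(\<Sum>k. t ^ (k + 2) *\<^sub>R C (k + 2)) = t\<^sup>2 *\<^sub>R exp_remainder A t"
  proof (cases "t = 0")
    case False
    have "summable (\<lambda>k. (1 / t\<^sup>2) *\<^sub>R (t ^ (k + 2) *\<^sub>R C (k + 2)))"
      by (intro summable_scaleR_right summable_ignore_initial_segment[OF summable])
    then have shifted: "summable (\<lambda>k. t ^ k *\<^sub>R C (k + 2))"
      using False by (simp add: power_add power2_eq_square)
    have "exp_remainder A t = (\<Sum>k. t ^ k *\<^sub>R C (k + 2))"
      by (simp add: exp_remainder_def C_def)
    with suminf_scaleR_right[OF shifted, of "t\<^sup>2"] show ?thesis
      by (simp add: power_add power2_eq_square mult_ac)
  qed simp
  also have "(\<Sum>k<2. t ^ k *\<^sub>R C k) = mat 1 + t *\<^sub>R A"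
    by (simp add: C_def eval_nat_numeral)
  finally show ?thesis by (simp add: algebra_simps)
qed

lemma exp_remainder_tendsto:
  fixes A :: "real^'n^'n"
  shows "(exp_remainder A \<longlongrightarrow> (1/2) *\<^sub>R (A ** A)) (at 0)"
proof -
  have "summable (\<lambda>k. norm ((1 / fact (k + 2)) *\<^sub>R mat_pow A (k + 2)))"
    using summable_ignore_initial_segment[OF summable_norm_exp_series[of A], of 2] by simp
  from powser_tendsto_at_0[OF this] show ?thesis
    by (simp add: exp_remainder_def[abs_def] eval_nat_numeral)
qed

definition commutes :: "real^'n^'n \<Rightarrow> real^'n^'n \<Rightarrow> bool" where
  "commutes Q X \<longleftrightarrow> Q ** X = X ** Q"

lemma commutes_diff: "commutes Q X \<Longrightarrow> commutes Q Y \<Longrightarrow> commutes Q (X - Y)"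
  and commutes_mult: "commutes Q X \<Longrightarrow> commutes Q Y \<Longrightarrow> commutes Q (X ** Y)"
  by (simp_all add: commutes_def matrix_mult_algebra) (metis matrix_mul_assoc)

lemma commutes_scaleR_iff: "c \<noteq> 0 \<Longrightarrow> commutes Q (c *\<^sub>R X) \<longleftrightarrow> commutes Q X"
  by (simp add: commutes_def matrix_mult_algebra)

lemma vanishing_expansion:
  fixes X :: "'a::real_normed_vector" and Y :: "real \<Rightarrow> 'a"
  assumes expansion: "\<And>t. t *\<^sub>R X + t\<^sup>2 *\<^sub>R Y t = 0"
    and lim: "(Y \<longlongrightarrow> Y0) (at 0)"
  shows "X = 0" and "Y0 = 0"
proof -
  have X_eq: "X = - t *\<^sub>R Y t" if "t \<noteq> 0" for t
  proof -
    have "t *\<^sub>R (X + t *\<^sub>R Y t) = 0"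
      using expansion[of t] by (simp add: algebra_simps power2_eq_square)
    with that show ?thesis by (simp add: eq_neg_iff_add_eq_0)
  qed
  have "((\<lambda>t. - t *\<^sub>R Y t) \<longlongrightarrow> - 0 *\<^sub>R Y0) (at 0)"
    by (intro tendsto_intros lim)
  then have "((\<lambda>t. - t *\<^sub>R Y t) \<longlongrightarrow> 0) (at 0)"
    by simp
  then have "((\<lambda>t. X) \<longlongrightarrow> 0) (at (0::real))"
    by (rule Lim_transform_eventually) (auto simp: eventually_at_filter X_eq)
  then show X0: "X = 0"
    by (rule LIM_const_eq)
  have "Y t = 0" if "t \<noteq> 0" for t
    using expansion[of t] X0 that by simp
  then have "((\<lambda>t. 0) \<longlongrightarrow> Y0) (at (0::real))"
    by (intro Lim_transform_eventually[OF lim]) (auto simp: eventually_at_filter)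
  then show "Y0 = 0"
    by (metis LIM_const_eq)
qed

lemma commutes_with_exp_products:
  fixes Q A B :: "real^'n^'n"
  assumes "\<And>t. commutes Q (mat_exp (t *\<^sub>R A) ** mat_exp (t *\<^sub>R B))"
  shows "commutes Q (A + B)"
    and "commutes Q ((1/2) *\<^sub>R (A ** A) + (1/2) *\<^sub>R (B ** B) + A ** B)"
proof -
  define commutator where "commutator X = Q ** X - X ** Q" for X :: "real^'n^'n"
  define H where "H t = exp_remainder A t + exp_remainder B t + A ** B
      + t *\<^sub>R (A ** exp_remainder B t + exp_remainder A t ** B)
      + t\<^sup>2 *\<^sub>R (exp_remainder A t ** exp_remainder B t)" for t
  have product: "mat_exp (t *\<^sub>R A) ** mat_exp (t *\<^sub>R B) = mat 1 + t *\<^sub>R (A + B) + t\<^sup>2 *\<^sub>R H t" for t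
    unfolding mat_exp_second_order H_def
    by (simp add: matrix_mult_algebra algebra_simps power2_eq_square)
  have expansion: "t *\<^sub>R commutator (A + B) + t\<^sup>2 *\<^sub>R commutator (H t) = 0" for t
    using assms[of t] unfolding commutes_def product commutator_def
    by (simp add: matrix_mult_algebra algebra_simps)
  have "(H \<longlongrightarrow> (1/2) *\<^sub>R (A ** A) + (1/2) *\<^sub>R (B ** B) + A ** B) (at 0)"
  proof -
    have "(H \<longlongrightarrow> (1/2) *\<^sub>R (A ** A) + (1/2) *\<^sub>R (B ** B) + A ** B
        + 0 *\<^sub>R (A ** ((1/2) *\<^sub>R (B ** B)) + ((1/2) *\<^sub>R (A ** A)) ** B)
        + 0\<^sup>2 *\<^sub>R (((1/2) *\<^sub>R (A ** A)) ** ((1/2) *\<^sub>R (B ** B)))) (at 0)"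
      unfolding H_def
      by (intro tendsto_intros bounded_bilinear.tendsto[OF bounded_bilinear_matrix_mult]
          exp_remainder_tendsto)
    then show ?thesis by simp
  qed
  then have lim: "((\<lambda>t. commutator (H t)) \<longlongrightarrow>
      commutator ((1/2) *\<^sub>R (A ** A) + (1/2) *\<^sub>R (B ** B) + A ** B)) (at 0)"
    unfolding commutator_def
    by (intro tendsto_intros bounded_bilinear.tendsto[OF bounded_bilinear_matrix_mult])
  show "commutes Q (A + B)"
    and "commutes Q ((1/2) *\<^sub>R (A ** A) + (1/2) *\<^sub>R (B ** B) + A ** B)"
    using vanishing_expansion[OF expansion lim] by (simp_all add: commutes_def commutator_def)
qed

lemma transpose_add_matrix: "transpose ((A::real^'n^'n) + B) = transpose A + transpose B"
  by (simp add: transpose_def vec_eq_iff)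

lemma commutes_with_symmetric_part_and_commutator:
  fixes Q S L :: "real^'n^'n"
  assumes S: "transpose S = S" and L: "transpose L = - L"
    and comm: "\<And>t. commutes Q (mat_exp (t *\<^sub>R - (S + L)) ** mat_exp (t *\<^sub>R - transpose (S + L)))"
  shows "commutes Q S" and "commutes Q (L ** S - S ** L)"
proof -
  have MT: "- transpose (S + L) = L - S"
    using S L by (simp add: transpose_add_matrix)
  note expansion = commutes_with_exp_products[of Q "- (S + L)" "L - S", OF comm[unfolded MT]]
  have "- (S + L) + (L - S) = (-2) *\<^sub>R S"
    by (simp add: algebra_simps scaleR_2)
  with expansion(1) have "commutes Q ((-2) *\<^sub>R S)"
    by (simp only:)
  then show cS: "commutes Q S"
    by (simp only: commutes_scaleR_iff)
  have "(1/2) *\<^sub>R (- (S + L) ** - (S + L)) + (1/2) *\<^sub>R ((L - S) ** (L - S)) + - (S + L) ** (L - S)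
      = 2 *\<^sub>R (S ** S) + (L ** S - S ** L)"
    by (simp add: matrix_mult_algebra algebra_simps scaleR_2) (simp add: vec_eq_iff)
  with expansion(2) have "commutes Q (2 *\<^sub>R (S ** S) + (L ** S - S ** L))"
    by simp
  moreover have "commutes Q (2 *\<^sub>R (S ** S))"
    using cS by (simp add: commutes_scaleR_iff commutes_mult)
  ultimately show "commutes Q (L ** S - S ** L)"
    using commutes_diff by fastforce
qed

lemma inner_matrix_transpose: "x \<bullet> (A *v y) = (transpose A *v x) \<bullet> (y::real^'n)"
  by (simp add: dot_lmul_matrix)

lemma symmetric_eigenvectors_orthogonal:
  fixes S :: "real^'n^'n"
  assumes "transpose S = S" "S *v u = a *\<^sub>R u" "S *v v = b *\<^sub>R v" "a \<noteq> b"
  shows "u \<bullet> v = 0"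
proof -
  have "a * (u \<bullet> v) = u \<bullet> (S *v v)"
    using assms(1,2) inner_matrix_transpose[of u S v] by simp
  also have "\<dots> = b * (u \<bullet> v)"
    using assms(3) by simp
  finally show ?thesis
    using assms(4) by simp
qed

definition eigenbasis :: "real^'n^'n \<Rightarrow> (real \<Rightarrow> real^'n) \<Rightarrow> bool" where
  "eigenbasis S ev \<longleftrightarrow>
     (\<forall>l\<in>real_eigenvalues S. ev l \<noteq> 0 \<and> S *v ev l = l *\<^sub>R ev l)
   \<and> (\<forall>w. (\<forall>l\<in>real_eigenvalues S. w \<bullet> ev l = 0) \<longrightarrow> w = 0)"

lemma eigenbasisD:
  assumes "eigenbasis S ev"
  shows "\<And>l. l \<in> real_eigenvalues S \<Longrightarrow> ev l \<noteq> 0"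
    and "\<And>l. l \<in> real_eigenvalues S \<Longrightarrow> S *v ev l = l *\<^sub>R ev l"
    and "\<And>w. (\<And>l. l \<in> real_eigenvalues S \<Longrightarrow> w \<bullet> ev l = 0) \<Longrightarrow> w = 0"
  using assms by (auto simp: eigenbasis_def)

(* A symmetric matrix with n distinct eigenvalues has such an eigenbasis: n
   pairwise orthogonal eigenvectors are independent, hence span R^n. *)
lemma sym_distinct_eig_eigenbasis:
  fixes S :: "real^'n^'n"
  assumes "sym_distinct_eig S"
  shows "\<exists>ev. eigenbasis S ev"
proof -
  let ?E = "real_eigenvalues S"
  have sym: "transpose S = S" and card: "card ?E = CARD('n)"
    using assms by (auto simp: sym_distinct_eig_def symmetric_matrix_def)
  define ev where "ev l = (SOME v. v \<noteq> 0 \<and> S *v v = l *\<^sub>R v)" for l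
  have ev: "ev l \<noteq> 0 \<and> S *v ev l = l *\<^sub>R ev l" if "l \<in> ?E" for l
    using someI_ex[of "\<lambda>v. v \<noteq> 0 \<and> S *v v = l *\<^sub>R v"] that
    by (simp add: real_eigenvalues_def ev_def)
  have orth: "ev l \<bullet> ev m = 0" if "l \<in> ?E" "m \<in> ?E" "l \<noteq> m" for l m
    using symmetric_eigenvectors_orthogonal[OF sym] ev that by blast
  have "inj_on ev ?E"
    by (rule inj_onI) (metis ev inner_eq_zero_iff orth)
  then have card_basis: "card (ev ` ?E) = CARD('n)"
    using card by (simp add: card_image)
  have "pairwise orthogonal (ev ` ?E)"
    by (auto simp: pairwise_def orthogonal_def intro: orth)
  moreover have "0 \<notin> ev ` ?E"
    using ev by force
  ultimately have "independent (ev ` ?E)"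
    by (rule pairwise_orthogonal_independent)
  then have spans: "UNIV \<subseteq> span (ev ` ?E)"
    by (intro card_ge_dim_independent) (auto simp: card_basis)
  have "w = 0" if w: "\<forall>l\<in>?E. w \<bullet> ev l = 0" for w
  proof -
    have "orthogonal w w"
      by (rule orthogonal_to_span[of w "ev ` ?E"]) (use spans w in \<open>auto simp: orthogonal_def\<close>)
    then show ?thesis
      by (simp add: orthogonal_def)
  qed
  with ev show ?thesis
    by (auto simp: eigenbasis_def)
qed

lemma eigenbasis_matrix_eq_zero:
  fixes X :: "real^'n^'n"
  assumes basis: "eigenbasis S ev"
    and entries: "\<And>l m. l \<in> real_eigenvalues S \<Longrightarrow> m \<in> real_eigenvalues S \<Longrightarrow> ev l \<bullet> (X *v ev m) = 0"
  shows "X = 0"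
proof -
  have columns: "X *v ev m = 0" if "m \<in> real_eigenvalues S" for m
    using eigenbasisD(3)[OF basis] entries[OF _ that] by (simp add: inner_commute)
  have "transpose X *v y = 0" for y
    by (rule eigenbasisD(3)[OF basis]) (simp add: dot_lmul_matrix columns)
  then have "transpose X = 0"
    by (simp add: matrix_eq)
  then show ?thesis
    by (metis transpose_transpose transpose_mat mat_0)
qed

lemma eigenbasis_eigenline:
  fixes S :: "real^'n^'n"
  assumes sym: "transpose S = S" and basis: "eigenbasis S ev"
    and l: "l \<in> real_eigenvalues S" and w: "S *v w = l *\<^sub>R w"
  shows "w = ((w \<bullet> ev l) / (ev l \<bullet> ev l)) *\<^sub>R ev l"
proof -
  have "w - ((w \<bullet> ev l) / (ev l \<bullet> ev l)) *\<^sub>R ev l = 0"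
  proof (rule eigenbasisD(3)[OF basis])
    fix m assume m: "m \<in> real_eigenvalues S"
    show "(w - ((w \<bullet> ev l) / (ev l \<bullet> ev l)) *\<^sub>R ev l) \<bullet> ev m = 0"
    proof (cases "m = l")
      case False
      have "w \<bullet> ev m = 0" and "ev l \<bullet> ev m = 0"
        using symmetric_eigenvectors_orthogonal[OF sym] eigenbasisD(2)[OF basis] l m w False
        by metis+
      then show ?thesis
        by (simp add: inner_diff_left)
    qed (use eigenbasisD(1)[OF basis l] in \<open>simp add: inner_diff_left\<close>)
  qed
  then show ?thesis
    by simp
qed

lemma orthogonal_matrix_eigenvector:
  fixes Q :: "real^'n^'n"
  assumes orth: "orthogonal_matrix Q" and v: "Q *v v = c *\<^sub>R v" "v \<noteq> 0"
  shows "c = 1 \<or> c = -1" and "transpose Q *v v = c *\<^sub>R v"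
proof -
  have QtQ: "transpose Q ** Q = mat 1"
    using orth by (simp add: orthogonal_matrix_def)
  have recovered: "transpose Q *v (Q *v v) = v"
    by (simp only: matrix_vector_mul_assoc QtQ matrix_vector_mul_lid)
  have "c * c * (v \<bullet> v) = (Q *v v) \<bullet> (Q *v v)"
    using v(1) by simp
  also have "\<dots> = v \<bullet> v"
    by (simp only: inner_matrix_transpose recovered)
  finally have "c * c = 1"
    using v(2) by simp
  then show sign: "c = 1 \<or> c = -1"
    by (simp add: square_eq_1_iff)
  have "c *\<^sub>R (transpose Q *v v) = v"
    using recovered v(1) by (simp add: matrix_vector_mult_scaleR)
  then show "transpose Q *v v = c *\<^sub>R v"
    using sign by (auto simp: minus_equation_iff)
qed

(* An orthogonal matrix commuting with S preserves its eigenlines, hence is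
   diagonal with entries +1/-1 in the eigenbasis of S. *)
lemma commuting_orthogonal_sign_diagonal:
  fixes Q S :: "real^'n^'n"
  assumes sym: "transpose S = S" and basis: "eigenbasis S ev"
    and orth: "orthogonal_matrix Q" and comm: "commutes Q S"
  obtains eps where "\<And>l. l \<in> real_eigenvalues S \<Longrightarrow>
      (eps l = 1 \<or> eps l = -1) \<and> Q *v ev l = eps l *\<^sub>R ev l \<and> transpose Q *v ev l = eps l *\<^sub>R ev l"
proof -
  have "\<exists>e. (e = 1 \<or> e = -1) \<and> Q *v ev l = e *\<^sub>R ev l \<and> transpose Q *v ev l = e *\<^sub>R ev l"
    if l: "l \<in> real_eigenvalues S" for l
  proof -
    have "S *v (Q *v ev l) = Q *v (S *v ev l)"
      using comm by (simp add: commutes_def matrix_vector_mul_assoc)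
    also have "\<dots> = l *\<^sub>R (Q *v ev l)"
      by (simp add: eigenbasisD(2)[OF basis l] matrix_vector_mult_scaleR)
    finally have "Q *v ev l = ((Q *v ev l) \<bullet> ev l / (ev l \<bullet> ev l)) *\<^sub>R ev l"
      by (rule eigenbasis_eigenline[OF sym basis l])
    then show ?thesis
      using orthogonal_matrix_eigenvector[OF orth _ eigenbasisD(1)[OF basis l]] by blast
  qed
  then show ?thesis
    using that by metis
qed

(* If Q = diag(eps) in the eigenbasis of S commutes with [L, S], then it commutes
   with L: the (l, m) entries of [Q, [L, S]] and [Q, L] are
   (eps l - eps m)(m - l) g and (eps l - eps m) g, with g the (l, m) entry of L. *)
lemma commutes_from_commutator:
  fixes Q S L :: "real^'n^'n"
  assumes sym: "transpose S = S" and basis: "eigenbasis S ev"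
    and eps: "\<And>l. l \<in> real_eigenvalues S \<Longrightarrow>
      (eps l = 1 \<or> eps l = -1) \<and> Q *v ev l = eps l *\<^sub>R ev l \<and> transpose Q *v ev l = eps l *\<^sub>R ev l"
    and comm: "commutes Q (L ** S - S ** L)"
  shows "commutes Q L"
proof -
  have "Q ** L - L ** Q = 0"
  proof (rule eigenbasis_matrix_eq_zero[OF basis])
    fix l m assume l: "l \<in> real_eigenvalues S" and m: "m \<in> real_eigenvalues S"
    have left: "ev l \<bullet> ((Q ** Y) *v ev m) = eps l * (ev l \<bullet> (Y *v ev m))" for Y
      using eps[OF l] by (simp add: matrix_vector_mul_assoc[symmetric] inner_matrix_transpose[of "ev l" Q])
    have right: "ev l \<bullet> ((Y ** Q) *v ev m) = eps m * (ev l \<bullet> (Y *v ev m))" for Y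
      using eps[OF m] by (simp add: matrix_vector_mul_assoc[symmetric] matrix_vector_mult_scaleR)
    define g where "g = ev l \<bullet> (L *v ev m)"
    have "ev l \<bullet> ((L ** S - S ** L) *v ev m) = ev l \<bullet> (L *v (S *v ev m)) - (S *v ev l) \<bullet> (L *v ev m)"
      using inner_matrix_transpose[of "ev l" S] sym
      by (simp add: matrix_vector_mult_diff_rdistrib matrix_vector_mul_assoc[symmetric] inner_diff_right)
    also have "\<dots> = (m - l) * g"
      by (simp add: eigenbasisD(2)[OF basis] l m g_def matrix_vector_mult_scaleR algebra_simps)
    finally have commutator_entry: "ev l \<bullet> ((L ** S - S ** L) *v ev m) = (m - l) * g" .
    have "ev l \<bullet> ((Q ** (L ** S - S ** L)) *v ev m) = ev l \<bullet> (((L ** S - S ** L) ** Q) *v ev m)"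
      using comm by (simp add: commutes_def)
    then have "eps l * ((m - l) * g) = eps m * ((m - l) * g)"
      by (simp only: left right commutator_entry)
    then have "(eps l - eps m) * ((m - l) * g) = 0"
      by (simp add: algebra_simps)
    moreover have "eps l = eps m" if "m = l"
      using that by simp
    ultimately have "(eps l - eps m) * g = 0"
      by auto
    then show "ev l \<bullet> ((Q ** L - L ** Q) *v ev m) = 0"
      using left[of L] right[of L]
      by (simp add: g_def matrix_vector_mult_diff_rdistrib inner_diff_right algebra_simps)
  qed
  then show ?thesis
    by (simp add: commutes_def)
qed

lemma eigenspace_invariant:
  fixes Q T :: "real^'n^'n"
  assumes "commutes Q T"
  shows "real_invariant_subspace T {x. Q *v x = c *\<^sub>R x}"
  unfolding real_invariant_subspace_def
proof (intro conjI ballI)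
  show "subspace {x. Q *v x = c *\<^sub>R x}"
    by (simp add: subspace_def matrix_vector_right_distrib matrix_vector_mult_scaleR scaleR_add_right)
  fix x assume "x \<in> {x. Q *v x = c *\<^sub>R x}"
  then have eigen: "Q *v x = c *\<^sub>R x"
    by simp
  have "Q *v (T *v x) = T *v (Q *v x)"
    using assms by (simp add: commutes_def matrix_vector_mul_assoc)
  also have "\<dots> = c *\<^sub>R (T *v x)"
    by (simp add: eigen matrix_vector_mult_scaleR)
  finally show "T *v x \<in> {x. Q *v x = c *\<^sub>R x}"
    by simp
qed

lemma commuting_with_irreducible_pair_is_scalar:
  fixes Q S L :: "real^'n^'n"
  assumes irreducible: "\<forall>k\<in>{1..CARD('n) - 1}. \<not> (\<exists>V. dim V = k \<and> real_invariant_subspace S V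
                                                   \<and> real_invariant_subspace L V)"
    and "commutes Q S" "commutes Q L"
    and v: "Q *v v = c *\<^sub>R v" "v \<noteq> 0"
  shows "Q = c *\<^sub>R mat 1"
proof -
  define V where "V = {x. Q *v x = c *\<^sub>R x}"
  have invariant: "real_invariant_subspace S V" "real_invariant_subspace L V"
    unfolding V_def by (rule eigenspace_invariant[OF assms(2)], rule eigenspace_invariant[OF assms(3)])
  have "dim V \<noteq> 0"
    using v by (auto simp: V_def)
  moreover have "dim V \<le> CARD('n)"
    by (rule dim_subset_UNIV_cart)
  moreover have "dim V \<notin> {1..CARD('n) - 1}"
    using irreducible invariant by blast
  ultimately have "dim V = CARD('n)"
    unfolding atLeastAtMost_iff by linarith
  then have "span V = UNIV"
    using dim_eq_full[of V] by simp
  moreover have "subspace V"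
    using invariant(1) by (simp add: real_invariant_subspace_def)
  ultimately have "V = UNIV"
    by (metis span_eq_iff)
  then have "Q *v x = (c *\<^sub>R mat 1) *v x" for x
    by (simp add: V_def scaleR_matrix_vector_assoc[symmetric] set_eq_iff)
  then show ?thesis
    by (simp add: matrix_eq)
qed

lemma orthogonal_commutant_trivial:
  fixes Q S L :: "real^'n^'n"
  assumes S: "sym_distinct_eig S"
    and irreducible: "\<forall>k\<in>{1..CARD('n) - 1}. \<not> (\<exists>V. dim V = k \<and> real_invariant_subspace S V
                                                   \<and> real_invariant_subspace L V)"
    and orth: "orthogonal_matrix Q"
    and comm_S: "commutes Q S" and comm_commutator: "commutes Q (L ** S - S ** L)"
  shows "Q = mat 1 \<or> Q = - mat 1"
proof -
  have sym: "transpose S = S"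
    using S by (simp add: sym_distinct_eig_def symmetric_matrix_def)
  obtain ev where basis: "eigenbasis S ev"
    using sym_distinct_eig_eigenbasis[OF S] by blast
  obtain eps where eps: "\<And>l. l \<in> real_eigenvalues S \<Longrightarrow>
      (eps l = 1 \<or> eps l = -1) \<and> Q *v ev l = eps l *\<^sub>R ev l \<and> transpose Q *v ev l = eps l *\<^sub>R ev l"
    using commuting_orthogonal_sign_diagonal[OF sym basis orth comm_S] by blast
  have comm_L: "commutes Q L"
    by (rule commutes_from_commutator[OF sym basis eps comm_commutator])
  have "card (real_eigenvalues S) = CARD('n)"
    using S by (simp add: sym_distinct_eig_def)
  then have "real_eigenvalues S \<noteq> {}"
    by auto
  then obtain l where l: "l \<in> real_eigenvalues S"
    by blast
  have "Q = eps l *\<^sub>R mat 1"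
    using commuting_with_irreducible_pair_is_scalar[OF irreducible comm_S comm_L]
      eps[OF l] eigenbasisD(1)[OF basis l] by blast
  then show ?thesis
    using eps[OF l] by auto
qed

theorem proposition5p1:
  fixes M S L :: "real^'n^'n"
  assumes "CARD('n) \<ge> 2"
    and "M = S + L"
    and "sym_distinct_eig S"
    and "skew_symmetric_matrix L"
    and "\<forall>k\<in>{1..CARD('n) - 1}. \<not> (\<exists>V. dim V = k \<and> real_invariant_subspace S V
                                          \<and> real_invariant_subspace L V)"
  shows "(\<Inter>x\<in>{0<..}. orth_commutant
            (mat_neg_powr x M ** mat_neg_powr x (transpose M))) = {mat 1, - mat 1}"
proof
  have sym: "transpose S = S" and skew: "transpose L = - L"
    using assms(3,4) by (simp_all add: sym_distinct_eig_def symmetric_matrix_def skew_symmetric_matrix_def)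
  show "(\<Inter>x\<in>{0<..}. orth_commutant (mat_neg_powr x M ** mat_neg_powr x (transpose M)))
      \<subseteq> {mat 1, - mat 1}"
  proof
    fix Q assume Q: "Q \<in> (\<Inter>x\<in>{0<..}. orth_commutant (mat_neg_powr x M ** mat_neg_powr x (transpose M)))"
    have orth: "orthogonal_matrix Q"
      using Q[THEN INT_D, of 1] by (simp add: orth_commutant_def)
    have neg_powr_exp: "mat_neg_powr (exp t) X = mat_exp (t *\<^sub>R - X)" for t and X :: "real^'n^'n"
      by (simp add: mat_neg_powr_def)
    have "commutes Q (mat_neg_powr (exp t) M ** mat_neg_powr (exp t) (transpose M))" for t
      using Q[THEN INT_D, of "exp t"] by (simp add: orth_commutant_def commutes_def)
    then have "commutes Q (mat_exp (t *\<^sub>R - (S + L)) ** mat_exp (t *\<^sub>R - transpose (S + L)))" for t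
      by (simp only: neg_powr_exp assms(2))
    from commutes_with_symmetric_part_and_commutator[OF sym skew this]
    show "Q \<in> {mat 1, - mat 1}"
      using orthogonal_commutant_trivial[OF assms(3,5) orth] by blast
  qed
  have "transpose (- mat 1 :: real^'n^'n) = - mat 1"
    by (simp add: transpose_def vec_eq_iff mat_def)
  then have "orthogonal_matrix (- mat 1 :: real^'n^'n)"
    by (simp add: orthogonal_matrix_def matrix_mult_algebra)
  then show "{mat 1, - mat 1}
      \<subseteq> (\<Inter>x\<in>{0<..}. orth_commutant (mat_neg_powr x M ** mat_neg_powr x (transpose M)))"
    by (auto simp: orth_commutant_def orthogonal_matrix_id matrix_mult_algebra)
qed

end
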